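(* Let $p,q\in\Bbbk^\times$ with $q\neq1$, and let $\Phi:A(q)\to A(p)$ be a graded isomorphism of type I. Then there are scalars $k_1,\dots,k_4,\ell_1,\dots,\ell_4\in\Bbbk$ with $k_1k_4-k_2k_3\neq0$ and $\ell_1\ell_4-\ell_2\ell_3\neq0$ such that $\Phi(a)=k_1a+k_2c$, $\Phi(b)=\ell_1b+\ell_2d$, $\Phi(c)=k_3a+k_4c$, $\Phi(d)=\ell_3b+\ell_4d$. If $k_1\neq0$ and $k_4\neq0$, then $p=q$.
   Context: $\Bbbk$ is an algebraically closed field of characteristic zero. Paths are written left to right; path algebras are graded by path length. Let $Q$ be the quiver with vertices $e_1,e_2$, arrows $a,c:e_1\to e_2$ and $b,d:e_2\to e_1$; $A(q)=\Bbbk Q/(ab-cd,\ ba-q\,dc)$. A graded isomorphism $\Phi:A(q)\to A(p)$ is an algebra isomorphism for which there is a permutation $\sigma$ of the vertices with $\Phi$ mapping the degree-$k$ part $e_uA(q)_ke_v$ onto $e_{\sigma(u)}A(p)_ke_{\sigma(v)}$ for all $k,u,v$. It is of type I if $\Phi(e_1)=e_1$ and $\Phi(e_2)=e_2$. *)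

theory Defs
  imports "HOL-Algebra.QuotRing" "HOL-Computational_Algebra.Polynomial" "HOL-Library.Function_Algebras"
begin

definition alg_closed :: "'k::field itself \<Rightarrow> bool" where
  "alg_closed _ \<longleftrightarrow> (\<forall>f :: 'k poly. degree f \<ge> 1 \<longrightarrow> (\<exists>x. poly f x = 0))"

datatype vert = V1 | V2
datatype arrow = Aa | Ab | Ac | Ad

fun src :: "arrow \<Rightarrow> vert" where
  "src Aa = V1" | "src Ac = V1" | "src Ab = V2" | "src Ad = V2"
fun tgt :: "arrow \<Rightarrow> vert" where
  "tgt Aa = V2" | "tgt Ac = V2" | "tgt Ab = V1" | "tgt Ad = V1"

text \<open>A path is a start vertex plus a list of arrows, read left to right.
  The trivial path at v is (v, []).\<close>
type_synonym qpath = "vert \<times> arrow list"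

fun composable :: "vert \<Rightarrow> arrow list \<Rightarrow> bool" where
  "composable v [] = True"
| "composable v (x # xs) = (src x = v \<and> composable (tgt x) xs)"

definition valid_path :: "qpath \<Rightarrow> bool" where
  "valid_path z \<longleftrightarrow> composable (fst z) (snd z)"

fun endv :: "vert \<Rightarrow> arrow list \<Rightarrow> vert" where
  "endv v [] = v"
| "endv v (x # xs) = endv (tgt x) xs"

definition path_end :: "qpath \<Rightarrow> vert" where
  "path_end z = endv (fst z) (snd z)"

definition pcomp :: "qpath \<Rightarrow> qpath \<Rightarrow> qpath option" where
  "pcomp x y = (if path_end x = fst y then Some (fst x, snd x @ snd y) else None)"

definition supp :: "(qpath \<Rightarrow> 'k::zero) \<Rightarrow> qpath set" where
  "supp f = {z. f z \<noteq> 0}"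

definition KQ :: "(qpath \<Rightarrow> 'k::field) set" where
  "KQ = {f. finite (supp f) \<and> (\<forall>z\<in>supp f. valid_path z)}"

definition basis :: "qpath \<Rightarrow> qpath \<Rightarrow> 'k::field" where
  "basis x = (\<lambda>z. if z = x then 1 else 0)"

definition pmult :: "(qpath \<Rightarrow> 'k::field) \<Rightarrow> (qpath \<Rightarrow> 'k) \<Rightarrow> qpath \<Rightarrow> 'k" where
  "pmult f g = (\<lambda>z. \<Sum>x\<in>supp f. \<Sum>y\<in>supp g.
                    if pcomp x y = Some z then f x * g y else 0)"

definition kQ :: "(qpath \<Rightarrow> 'k::field) ring" where
  "kQ = \<lparr>carrier = KQ, monoid.mult = pmult, one = basis (V1, []) + basis (V2, []),
         zero = 0, add = (+)\<rparr>"

definition idem :: "vert \<Rightarrow> qpath \<Rightarrow> 'k::field" where "idem v = basis (v, [])"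
definition arr :: "arrow \<Rightarrow> qpath \<Rightarrow> 'k::field" where "arr x = basis (src x, [x])"
definition path2 :: "arrow \<Rightarrow> arrow \<Rightarrow> qpath \<Rightarrow> 'k::field" where
  "path2 x y = basis (src x, [x, y])"

definition smul :: "'k::field \<Rightarrow> (qpath \<Rightarrow> 'k) \<Rightarrow> qpath \<Rightarrow> 'k" where
  "smul c f = (\<lambda>z. c * f z)"

definition Rel :: "'k::field \<Rightarrow> (qpath \<Rightarrow> 'k) set" where
  "Rel q = genideal kQ {path2 Aa Ab - path2 Ac Ad, path2 Ab Aa - smul q (path2 Ad Ac)}"

definition Aq :: "'k::field \<Rightarrow> (qpath \<Rightarrow> 'k) set ring" where
  "Aq q = kQ Quot Rel q"

definition cls :: "'k::field \<Rightarrow> (qpath \<Rightarrow> 'k) \<Rightarrow> (qpath \<Rightarrow> 'k) set" where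
  "cls q x = Rel q +>\<^bsub>kQ\<^esub> x"

definition Apiece :: "'k::field \<Rightarrow> vert \<Rightarrow> nat \<Rightarrow> vert \<Rightarrow> (qpath \<Rightarrow> 'k) set set" where
  "Apiece q u n v = cls q ` {x \<in> KQ. \<forall>z\<in>supp x. fst z = u \<and> length (snd z) = n \<and> path_end z = v}"

text \<open>Algebra isomorphism: ring isomorphism of the quotients that is k-linear.\<close>
definition alg_iso :: "'k::field \<Rightarrow> 'k \<Rightarrow> ((qpath \<Rightarrow> 'k) set \<Rightarrow> (qpath \<Rightarrow> 'k) set) \<Rightarrow> bool" where
  "alg_iso q p \<Phi> \<longleftrightarrow> \<Phi> \<in> ring_iso (Aq q) (Aq p) \<and>
     (\<forall>c x y. x \<in> KQ \<longrightarrow> y \<in> KQ \<longrightarrow> \<Phi> (cls q x) = cls p y \<longrightarrow> \<Phi> (cls q (smul c x)) = cls p (smul c y))"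

definition graded_iso :: "'k::field \<Rightarrow> 'k \<Rightarrow> ((qpath \<Rightarrow> 'k) set \<Rightarrow> (qpath \<Rightarrow> 'k) set) \<Rightarrow> bool" where
  "graded_iso q p \<Phi> \<longleftrightarrow> alg_iso q p \<Phi> \<and>
     (\<exists>\<sigma>. bij \<sigma> \<and> (\<forall>u n v. \<Phi> ` Apiece q u n v = Apiece p (\<sigma> u) n (\<sigma> v)))"

definition type_I :: "'k::field \<Rightarrow> 'k \<Rightarrow> ((qpath \<Rightarrow> 'k) set \<Rightarrow> (qpath \<Rightarrow> 'k) set) \<Rightarrow> bool" where
  "type_I q p \<Phi> \<longleftrightarrow> \<Phi> (cls q (idem V1)) = cls p (idem V1) \<and> \<Phi> (cls q (idem V2)) = cls p (idem V2)"

end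

theory Submission
  imports Defs
begin

text \<open>
  A graded isomorphism of type I fixes both vertices, so it maps each arrow to a linear
  combination of the parallel arrows; bijectivity makes the two coefficient matrices
  invertible. Since the relation ideal of A(p) has no component in degrees 0 and 1 and its
  degree-2 component is spanned by ab - cd and ba - p dc, the images of the two defining
  relations of A(q) impose six bilinear equations on the coefficients. When k1 and k4 are
  nonzero, these equations together with q \<noteq> 1 force the matrices to be diagonal, and then
  the equation coming from ba - q dc reads p k1 l1 = q k1 l1, i.e. p = q.
\<close>

section \<open>The path algebra is a ring\<close>

lemma composable_append:
  "composable v (xs @ ys) \<longleftrightarrow> composable v xs \<and> composable (endv v xs) ys"
  by (induction xs arbitrary: v) auto

lemma endv_append: "endv v (xs @ ys) = endv (endv v xs) ys"
  by (induction xs arbitrary: v) auto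

definition path_take :: "nat \<Rightarrow> qpath \<Rightarrow> qpath" where
  "path_take i z = (fst z, take i (snd z))"

definition path_drop :: "nat \<Rightarrow> qpath \<Rightarrow> qpath" where
  "path_drop i z = (endv (fst z) (take i (snd z)), drop i (snd z))"

lemma pcomp_Some_iff:
  "pcomp x y = Some z \<longleftrightarrow> path_end x = fst y \<and> z = (fst x, snd x @ snd y)"
  unfolding pcomp_def by auto

lemma pcomp_path_take_drop: "pcomp (path_take i z) (path_drop i z) = Some z"
  unfolding pcomp_def path_take_def path_drop_def path_end_def by simp

lemma path_take_take: "j \<le> i \<Longrightarrow> path_take j (path_take i z) = path_take j z"
  unfolding path_take_def by (simp add: min_def)

lemma path_drop_take: "j \<le> i \<Longrightarrow> path_drop j (path_take i z) = path_take (i - j) (path_drop j z)"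
  unfolding path_take_def path_drop_def by (simp add: min_def drop_take)

lemma path_drop_drop: "path_drop m (path_drop j z) = path_drop (j + m) z"
  unfolding path_drop_def by (simp add: take_add endv_append add.commute)

lemma inj_on_path_split: "inj_on (\<lambda>i. (path_take i z, path_drop i z)) {..length (snd z)}"
  by (rule inj_onI) (auto simp: path_take_def dest: arg_cong[of _ _ length])

lemma pmult_nonzero_imp_pcomp:
  assumes "pmult f g z \<noteq> 0"
  obtains x y where "x \<in> supp f" "y \<in> supp g" "pcomp x y = Some z"
proof -
  obtain x where x: "x \<in> supp f"
    and "(\<Sum>y\<in>supp g. if pcomp x y = Some z then f x * g y else 0) \<noteq> 0"
    using assms unfolding pmult_def using sum.not_neutral_contains_not_neutral by blast
  then obtain y where "y \<in> supp g" "(if pcomp x y = Some z then f x * g y else 0) \<noteq> 0"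
    using sum.not_neutral_contains_not_neutral by blast
  with x show thesis by (intro that) (auto split: if_splits)
qed

lemma finite_supp_pmult:
  assumes "finite (supp f)" "finite (supp g)"
  shows "finite (supp (pmult f g))"
proof (rule finite_subset)
  show "supp (pmult f g) \<subseteq> (\<lambda>(x, y). (fst x, snd x @ snd y)) ` (supp f \<times> supp g)"
  proof
    fix z assume "z \<in> supp (pmult f g)"
    then have "pmult f g z \<noteq> 0" unfolding supp_def by simp
    then obtain x y where "x \<in> supp f" "y \<in> supp g" "pcomp x y = Some z"
      by (rule pmult_nonzero_imp_pcomp)
    then show "z \<in> (\<lambda>(x, y). (fst x, snd x @ snd y)) ` (supp f \<times> supp g)"
      by (intro rev_image_eqI[of "(x, y)"]) (auto simp: pcomp_Some_iff)
  qed
qed (use assms in simp)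

lemma pmult_eq_sum_splits:
  assumes "finite (supp f)" "finite (supp g)"
  shows "pmult f g z = (\<Sum>i\<le>length (snd z). f (path_take i z) * g (path_drop i z))"
proof -
  define splits where "splits = (\<lambda>i. (path_take i z, path_drop i z)) ` {..length (snd z)}"
  define F where "F = (\<lambda>(x, y). if pcomp x y = Some z then f x * g y else 0)"
  have "pmult f g z = sum F (supp f \<times> supp g)"
    unfolding pmult_def F_def by (simp add: sum.cartesian_product)
  also have "\<dots> = sum F splits"
  proof (rule sum.mono_neutral_cong)
    show "F w = 0" if "w \<in> splits - supp f \<times> supp g" for w
      using that unfolding F_def supp_def by (cases w) (auto split: if_splits)
    show "F w = 0" if w: "w \<in> supp f \<times> supp g - splits" for w
    proof (rule ccontr)
      obtain x y where xy: "w = (x, y)" by (cases w)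
      assume "F w \<noteq> 0"
      then have "path_end x = fst y" "z = (fst x, snd x @ snd y)"
        unfolding F_def xy by (auto simp: pcomp_Some_iff split: if_splits)
      then have "w = (path_take (length (snd x)) z, path_drop (length (snd x)) z)"
        "length (snd x) \<in> {..length (snd z)}"
        by (auto simp: xy path_take_def path_drop_def path_end_def)
      with w show False unfolding splits_def by blast
    qed
  qed (use assms in \<open>simp_all add: splits_def\<close>)
  also have "\<dots> = (\<Sum>i\<le>length (snd z). f (path_take i z) * g (path_drop i z))"
    unfolding splits_def by (simp add: sum.reindex[OF inj_on_path_split] F_def pcomp_path_take_drop)
  finally show ?thesis .
qed

lemma pmult_assoc:
  assumes f: "finite (supp f)" and g: "finite (supp g)" and h: "finite (supp h)"
  shows "pmult (pmult f g) h = pmult f (pmult g h)"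
proof
  fix z :: qpath
  define n where "n = length (snd z)"
  define G where "G = (\<lambda>j m. f (path_take j z) * g (path_take m (path_drop j z)) * h (path_drop (j + m) z))"
  have "pmult (pmult f g) h z = (\<Sum>i\<le>n. pmult f g (path_take i z) * h (path_drop i z))"
    unfolding n_def by (rule pmult_eq_sum_splits[OF finite_supp_pmult[OF f g] h])
  also have "\<dots> = (\<Sum>i\<le>n. \<Sum>j\<le>i. G j (i - j))"
  proof (rule sum.cong[OF refl])
    fix i assume "i \<in> {..n}"
    then have "length (snd (path_take i z)) = i" unfolding n_def path_take_def by auto
    then show "pmult f g (path_take i z) * h (path_drop i z) = (\<Sum>j\<le>i. G j (i - j))"
      by (simp add: pmult_eq_sum_splits[OF f g] sum_distrib_right G_def path_take_take path_drop_take)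
  qed
  also have "\<dots> = (\<Sum>(j, m)\<in>{(j, m). j + m \<le> n}. G j m)"
    by (rule sum.triangle_reindex_eq[symmetric])
  also have "\<dots> = (\<Sum>(j, m)\<in>Sigma {..n} (\<lambda>j. {..n - j}). G j m)"
    by (rule sum.cong) auto
  also have "\<dots> = (\<Sum>j\<le>n. \<Sum>m\<le>n - j. G j m)"
    by (rule sum.Sigma[symmetric]) auto
  also have "\<dots> = (\<Sum>j\<le>n. f (path_take j z) * pmult g h (path_drop j z))"
  proof (rule sum.cong[OF refl])
    fix j
    have "length (snd (path_drop j z)) = n - j" unfolding n_def path_drop_def by simp
    then show "(\<Sum>m\<le>n - j. G j m) = f (path_take j z) * pmult g h (path_drop j z)"
      by (simp add: pmult_eq_sum_splits[OF g h] sum_distrib_left G_def path_drop_drop mult.assoc)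
  qed
  also have "\<dots> = pmult f (pmult g h) z"
    unfolding n_def by (rule pmult_eq_sum_splits[OF f finite_supp_pmult[OF g h], symmetric])
  finally show "pmult (pmult f g) h z = pmult f (pmult g h) z" .
qed

lemma supp_add: "supp (f + g) \<subseteq> supp f \<union> supp (g :: qpath \<Rightarrow> 'k::monoid_add)"
  unfolding supp_def by (auto simp: plus_fun_def)

lemma pmult_distrib_right:
  assumes "finite (supp f)" "finite (supp g)" "finite (supp h)"
  shows "pmult (f + g) h = pmult f h + pmult g h"
proof -
  have "finite (supp (f + g))"
    using finite_subset[OF supp_add] assms by blast
  then show ?thesis
    using assms by (simp add: fun_eq_iff pmult_eq_sum_splits sum.distrib distrib_right)
qed

lemma pmult_distrib_left:
  assumes "finite (supp f)" "finite (supp g)" "finite (supp h)"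
  shows "pmult h (f + g) = pmult h f + pmult h g"
proof -
  have "finite (supp (f + g))"
    using finite_subset[OF supp_add] assms by blast
  then show ?thesis
    using assms by (simp add: fun_eq_iff pmult_eq_sum_splits sum.distrib distrib_left)
qed

definition one_kQ :: "qpath \<Rightarrow> 'k::field" where
  "one_kQ = basis (V1, []) + basis (V2, [])"

lemma one_kQ_apply: "one_kQ z = (if snd z = [] then 1 else 0)"
  unfolding one_kQ_def basis_def by (cases z; cases "fst z") auto

lemma supp_one_kQ: "supp one_kQ = {(V1, []), (V2, [])}"
  unfolding supp_def one_kQ_apply by (auto; case_tac a; simp)

lemma finite_supp_one_kQ: "finite (supp one_kQ)"
  by (simp add: supp_one_kQ)

lemma pmult_one_kQ_left:
  assumes "finite (supp f)"
  shows "pmult one_kQ f = f"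
proof
  fix z :: qpath
  have "pmult one_kQ f z = (\<Sum>i\<le>length (snd z). if i = 0 then f z else 0)"
    unfolding pmult_eq_sum_splits[OF finite_supp_one_kQ assms]
    by (intro sum.cong[OF refl]) (auto simp: one_kQ_apply path_take_def path_drop_def)
  then show "pmult one_kQ f z = f z" by simp
qed

lemma pmult_one_kQ_right:
  assumes "finite (supp f)"
  shows "pmult f one_kQ = f"
proof
  fix z :: qpath
  have "pmult f one_kQ z = (\<Sum>i\<le>length (snd z). if i = length (snd z) then f z else 0)"
    unfolding pmult_eq_sum_splits[OF assms finite_supp_one_kQ]
    by (intro sum.cong[OF refl]) (auto simp: one_kQ_apply path_take_def path_drop_def)
  then show "pmult f one_kQ z = f z" by simp
qed

lemma KQ_iff: "f \<in> KQ \<longleftrightarrow> finite (supp f) \<and> (\<forall>z\<in>supp f. valid_path z)"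
  unfolding KQ_def by simp

lemma KQ_finite_supp: "f \<in> KQ \<Longrightarrow> finite (supp f)"
  unfolding KQ_iff by simp

lemma KQ_zero: "0 \<in> KQ"
  unfolding KQ_iff supp_def by simp

lemma KQ_add: "f \<in> KQ \<Longrightarrow> g \<in> KQ \<Longrightarrow> f + g \<in> KQ"
  unfolding KQ_iff using finite_subset[OF supp_add] supp_add by blast

lemma KQ_uminus: "f \<in> KQ \<Longrightarrow> - f \<in> KQ"
  unfolding KQ_iff supp_def by simp

lemma KQ_diff: "f \<in> KQ \<Longrightarrow> g \<in> KQ \<Longrightarrow> f - g \<in> KQ"
  using KQ_add[OF _ KQ_uminus, of f g] by simp

lemma KQ_smul: "f \<in> KQ \<Longrightarrow> smul c f \<in> KQ"
  unfolding KQ_iff smul_def supp_def by (auto intro: finite_subset[of _ "supp f"] simp: supp_def)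

lemma KQ_pmult:
  assumes f: "f \<in> KQ" and g: "g \<in> KQ"
  shows "pmult f g \<in> KQ"
proof -
  have "valid_path z" if "z \<in> supp (pmult f g)" for z
  proof -
    from that have "pmult f g z \<noteq> 0" by (simp add: supp_def)
    then obtain x y where "x \<in> supp f" "y \<in> supp g" "pcomp x y = Some z"
      by (rule pmult_nonzero_imp_pcomp)
    with f g show ?thesis
      by (auto simp: KQ_iff pcomp_Some_iff valid_path_def path_end_def composable_append)
  qed
  with f g show ?thesis by (simp add: KQ_iff finite_supp_pmult)
qed

lemma supp_basis: "supp (basis z) = {z}"
  unfolding supp_def basis_def by auto

lemma pmult_basis:
  "pmult (basis u) (basis w) = (if path_end u = fst w then basis (fst u, snd u @ snd w) else 0)"
  unfolding pmult_def supp_basis by (rule ext) (simp add: pcomp_def basis_def)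

lemma pmult_arr: "tgt x = src y \<Longrightarrow> pmult (arr x) (arr y) = path2 x y"
  unfolding arr_def path2_def pmult_basis by (simp add: path_end_def)

lemma KQ_basis: "valid_path z \<Longrightarrow> basis z \<in> KQ"
  unfolding KQ_iff supp_def basis_def by simp

lemma KQ_one_kQ: "one_kQ \<in> KQ"
  unfolding one_kQ_def by (intro KQ_add KQ_basis) (simp_all add: valid_path_def)

lemma KQ_arr: "arr x \<in> KQ"
  unfolding arr_def by (rule KQ_basis) (simp add: valid_path_def)

lemma KQ_idem: "idem v \<in> KQ"
  unfolding idem_def by (rule KQ_basis) (simp add: valid_path_def)

lemma kQ_simps [simp]:
  "carrier kQ = KQ" "monoid.mult kQ = pmult" "one kQ = one_kQ" "zero kQ = 0" "add kQ = (+)"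
  unfolding kQ_def one_kQ_def by simp_all

lemma abelian_group_kQ: "abelian_group (kQ :: (qpath \<Rightarrow> 'k::field) ring)"
proof (rule abelian_groupI)
  fix x :: "qpath \<Rightarrow> 'k" assume "x \<in> carrier kQ"
  then show "\<exists>y\<in>carrier kQ. y \<oplus>\<^bsub>kQ\<^esub> x = \<zero>\<^bsub>kQ\<^esub>"
    using KQ_uminus by (intro bexI[of _ "- x"]) simp_all
qed (simp_all add: KQ_add KQ_zero add.assoc add.commute)

lemma ring_kQ: "ring (kQ :: (qpath \<Rightarrow> 'k::field) ring)"
proof (rule ringI[OF abelian_group_kQ])
  show "monoid (kQ :: (qpath \<Rightarrow> 'k) ring)"
    by (rule monoidI) (simp_all add: KQ_pmult KQ_one_kQ pmult_assoc KQ_finite_supp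
        pmult_one_kQ_left pmult_one_kQ_right)
qed (simp_all add: KQ_finite_supp pmult_distrib_left pmult_distrib_right)

lemma a_inv_kQ: "x \<in> KQ \<Longrightarrow> \<ominus>\<^bsub>kQ\<^esub> x = - x"
  by (rule abelian_group.minus_equality[OF abelian_group_kQ]) (simp_all add: KQ_uminus)

lemma pmult_deg0:
  "finite (supp f) \<Longrightarrow> finite (supp g) \<Longrightarrow> pmult f g (v, []) = f (v, []) * g (v, [])"
  by (simp add: pmult_eq_sum_splits path_take_def path_drop_def)

lemma pmult_deg1:
  "finite (supp f) \<Longrightarrow> finite (supp g) \<Longrightarrow>
   pmult f g (v, [x]) = f (v, []) * g (v, [x]) + f (v, [x]) * g (tgt x, [])"
  by (simp add: pmult_eq_sum_splits path_take_def path_drop_def)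

lemma pmult_deg2:
  "finite (supp f) \<Longrightarrow> finite (supp g) \<Longrightarrow>
   pmult f g (v, [x, y]) = f (v, []) * g (v, [x, y]) + f (v, [x]) * g (tgt x, [y])
      + f (v, [x, y]) * g (tgt y, [])"
  by (simp add: pmult_eq_sum_splits path_take_def path_drop_def numeral_2_eq_2)

definition vanishes_deg_le1 :: "(qpath \<Rightarrow> 'k::field) \<Rightarrow> bool" where
  "vanishes_deg_le1 f \<longleftrightarrow> (\<forall>z. length (snd z) \<le> 1 \<longrightarrow> f z = 0)"

lemma vanishes_deg_le1_iff:
  "vanishes_deg_le1 f \<longleftrightarrow> (\<forall>v. f (v, []) = 0) \<and> (\<forall>v x. f (v, [x]) = 0)"
proof -
  have "length xs \<le> 1 \<longleftrightarrow> xs = [] \<or> (\<exists>x. xs = [x])" for xs :: "arrow list"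
    by (cases xs) auto
  then show ?thesis unfolding vanishes_deg_le1_def by auto
qed

lemma vanishes_deg_le1_pmult:
  assumes "finite (supp f)" "finite (supp g)" "vanishes_deg_le1 f \<or> vanishes_deg_le1 g"
  shows "vanishes_deg_le1 (pmult f g)"
  using assms by (auto simp: vanishes_deg_le1_iff pmult_deg0 pmult_deg1)

section \<open>An ideal containing the relations\<close>

text \<open>
  The conditions on the degree-2 coefficients say that the degree-2 component lies in the span
  of ab - cd and ba - p dc. This ideal contains Rel p, and it is all that is used about Rel p.
\<close>

definition Rel_cover :: "'k::field \<Rightarrow> (qpath \<Rightarrow> 'k) set" where
  "Rel_cover p = {f \<in> KQ. vanishes_deg_le1 f \<and>
     f (V1, [Aa, Ad]) = 0 \<and> f (V1, [Ac, Ab]) = 0 \<and> f (V1, [Aa, Ab]) + f (V1, [Ac, Ad]) = 0 \<and>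
     f (V2, [Ab, Ac]) = 0 \<and> f (V2, [Ad, Aa]) = 0 \<and> p * f (V2, [Ab, Aa]) + f (V2, [Ad, Ac]) = 0}"

lemma ideal_Rel_cover: "ideal (Rel_cover p) (kQ :: (qpath \<Rightarrow> 'k::field) ring)"
proof (rule idealI[OF ring_kQ])
  show "subgroup (Rel_cover p) (add_monoid (kQ :: (qpath \<Rightarrow> 'k) ring))"
  proof (rule subgroup.intro)
    fix x :: "qpath \<Rightarrow> 'k" assume x: "x \<in> Rel_cover p"
    have "(- x) (V1, [Aa, Ab]) + (- x) (V1, [Ac, Ad]) = - (x (V1, [Aa, Ab]) + x (V1, [Ac, Ad]))"
      "p * (- x) (V2, [Ab, Aa]) + (- x) (V2, [Ad, Ac]) = - (p * x (V2, [Ab, Aa]) + x (V2, [Ad, Ac]))"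
      by simp_all
    with x have "- x \<in> Rel_cover p"
      unfolding Rel_cover_def vanishes_deg_le1_def by (simp only: mem_Collect_eq) (simp add: KQ_uminus)
    moreover have "inv\<^bsub>add_monoid kQ\<^esub> x = - x"
      using x a_inv_kQ unfolding Rel_cover_def a_inv_def[symmetric] by blast
    ultimately show "inv\<^bsub>add_monoid kQ\<^esub> x \<in> Rel_cover p" by simp
  qed (auto simp: Rel_cover_def vanishes_deg_le1_def KQ_add KQ_zero algebra_simps)
next
  fix f x :: "qpath \<Rightarrow> 'k" assume f: "f \<in> Rel_cover p" and x: "x \<in> carrier kQ"
  then have fin: "finite (supp f)" "finite (supp x)" and low: "vanishes_deg_le1 f"
    by (simp_all add: Rel_cover_def KQ_finite_supp)
  have deg2: "pmult x f (v, [y, w]) = x (v, []) * f (v, [y, w])"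
    "pmult f x (v, [y, w]) = f (v, [y, w]) * x (tgt w, [])" for v y w
    using fin low by (simp_all add: pmult_deg2 vanishes_deg_le1_iff)
  from f x fin low deg2 show "x \<otimes>\<^bsub>kQ\<^esub> f \<in> Rel_cover p"
    unfolding Rel_cover_def
    by (simp add: KQ_pmult vanishes_deg_le1_pmult mult.left_commute[of p] flip: distrib_left)
  from f x fin low deg2 show "f \<otimes>\<^bsub>kQ\<^esub> x \<in> Rel_cover p"
    unfolding Rel_cover_def
    by (simp add: KQ_pmult vanishes_deg_le1_pmult flip: distrib_right mult.assoc)
qed

lemma KQ_path2: "tgt x = src y \<Longrightarrow> path2 x y \<in> KQ"
  unfolding path2_def by (rule KQ_basis) (simp add: valid_path_def)

lemma Rel_generators_KQ:
  "{path2 Aa Ab - path2 Ac Ad, path2 Ab Aa - smul q (path2 Ad Ac)} \<subseteq> (KQ :: (qpath \<Rightarrow> 'k::field) set)"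
proof -
  have "path2 Aa Ab - path2 Ac Ad \<in> (KQ :: (qpath \<Rightarrow> 'k) set)"
    by (intro KQ_diff KQ_path2) simp_all
  moreover have "path2 Ab Aa - smul q (path2 Ad Ac) \<in> (KQ :: (qpath \<Rightarrow> 'k) set)"
    by (intro KQ_diff KQ_smul KQ_path2) simp_all
  ultimately show ?thesis by simp
qed

lemma ideal_Rel: "ideal (Rel q) (kQ :: (qpath \<Rightarrow> 'k::field) ring)"
  unfolding Rel_def by (rule ring.genideal_ideal[OF ring_kQ]) (use Rel_generators_KQ in simp)

lemma Rel_generators_in_Rel:
  "path2 Aa Ab - path2 Ac Ad \<in> Rel (q :: 'k::field)"
  "path2 Ab Aa - smul q (path2 Ad Ac) \<in> Rel (q :: 'k::field)"
  using ring.genideal_self[OF ring_kQ] Rel_generators_KQ[of q] unfolding Rel_def kQ_simps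
  by blast+

lemma zero_in_Rel: "0 \<in> Rel (q :: 'k::field)"
  using additive_subgroup.zero_closed[OF ideal.axioms(1)[OF ideal_Rel]] by simp

lemma Rel_subset_Rel_cover: "Rel q \<subseteq> Rel_cover (q :: 'k::field)"
  unfolding Rel_def
proof (rule ring.genideal_minimal[OF ring_kQ ideal_Rel_cover])
  show "{path2 Aa Ab - path2 Ac Ad, path2 Ab Aa - smul q (path2 Ad Ac)} \<subseteq> Rel_cover q"
    using Rel_generators_KQ[of q]
    by (auto simp: Rel_cover_def vanishes_deg_le1_def path2_def basis_def smul_def)
qed

lemma Rel_vanishes_deg_le1: "f \<in> Rel q \<Longrightarrow> vanishes_deg_le1 f"
  using Rel_subset_Rel_cover unfolding Rel_cover_def by blast

lemma cls_ring_hom: "cls q \<in> ring_hom (kQ :: (qpath \<Rightarrow> 'k::field) ring) (Aq q)"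
proof -
  have "cls q = (+>\<^bsub>kQ\<^esub>) (Rel q)" by (simp add: fun_eq_iff cls_def)
  then show ?thesis unfolding Aq_def by (simp add: ideal.rcos_ring_hom[OF ideal_Rel])
qed

lemma ring_Aq: "ring (Aq (q :: 'k::field))"
  unfolding Aq_def by (rule ideal.quotient_is_ring[OF ideal_Rel])

lemma cls_zero: "cls q 0 = \<zero>\<^bsub>Aq (q :: 'k::field)\<^esub>"
  using ring_hom_zero[OF cls_ring_hom ring_kQ ring_Aq] by simp

lemma cls_carrier: "x \<in> KQ \<Longrightarrow> cls q x \<in> carrier (Aq q)"
  using ring_hom_closed[OF cls_ring_hom] by simp

lemma cls_add: "x \<in> KQ \<Longrightarrow> y \<in> KQ \<Longrightarrow> cls q (x + y) = cls q x \<oplus>\<^bsub>Aq q\<^esub> cls q y"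
  using ring_hom_add[OF cls_ring_hom, of x y q] by simp

lemma cls_pmult: "x \<in> KQ \<Longrightarrow> y \<in> KQ \<Longrightarrow> cls q (pmult x y) = cls q x \<otimes>\<^bsub>Aq q\<^esub> cls q y"
  using ring_hom_mult[OF cls_ring_hom, of x y q] by simp

lemma cls_eq_iff:
  assumes "x \<in> KQ" "y \<in> KQ"
  shows "cls q x = cls q y \<longleftrightarrow> x - y \<in> Rel (q :: 'k::field)"
proof -
  interpret I: ideal "Rel q" "kQ :: (qpath \<Rightarrow> 'k) ring" by (rule ideal_Rel)
  have "cls q x = cls q y \<longleftrightarrow> x \<in> cls q y"
    using assms I.a_rcos_self[of x] I.a_repr_independence'[of x y] by (auto simp: cls_def)
  also have "\<dots> \<longleftrightarrow> x - y \<in> Rel q"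
    using assms I.a_rcos_module_minus[OF ring_kQ, of y x]
    by (simp add: cls_def a_minus_def a_inv_kQ)
  finally show ?thesis .
qed

lemma alg_iso_add:
  assumes "alg_iso q p \<Phi>" "x1 \<in> KQ" "x2 \<in> KQ" "y1 \<in> KQ" "y2 \<in> KQ"
    "\<Phi> (cls q x1) = cls p y1" "\<Phi> (cls q x2) = cls p y2"
  shows "\<Phi> (cls q (x1 + x2)) = cls p (y1 + y2)"
proof -
  have hom: "\<Phi> \<in> ring_hom (Aq q) (Aq p)" using assms(1) by (simp add: alg_iso_def ring_iso_def)
  have "\<Phi> (cls q (x1 + x2)) = \<Phi> (cls q x1 \<oplus>\<^bsub>Aq q\<^esub> cls q x2)"
    using assms by (simp add: cls_add)
  also have "\<dots> = \<Phi> (cls q x1) \<oplus>\<^bsub>Aq p\<^esub> \<Phi> (cls q x2)"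
    using assms by (simp add: ring_hom_add[OF hom] cls_carrier)
  also have "\<dots> = cls p (y1 + y2)" using assms by (simp add: cls_add)
  finally show ?thesis .
qed

lemma alg_iso_pmult:
  assumes "alg_iso q p \<Phi>" "x1 \<in> KQ" "x2 \<in> KQ" "y1 \<in> KQ" "y2 \<in> KQ"
    "\<Phi> (cls q x1) = cls p y1" "\<Phi> (cls q x2) = cls p y2"
  shows "\<Phi> (cls q (pmult x1 x2)) = cls p (pmult y1 y2)"
proof -
  have hom: "\<Phi> \<in> ring_hom (Aq q) (Aq p)" using assms(1) by (simp add: alg_iso_def ring_iso_def)
  have "\<Phi> (cls q (pmult x1 x2)) = \<Phi> (cls q x1 \<otimes>\<^bsub>Aq q\<^esub> cls q x2)"
    using assms by (simp add: cls_pmult)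
  also have "\<dots> = \<Phi> (cls q x1) \<otimes>\<^bsub>Aq p\<^esub> \<Phi> (cls q x2)"
    using assms by (simp add: ring_hom_mult[OF hom] cls_carrier)
  also have "\<dots> = cls p (pmult y1 y2)" using assms by (simp add: cls_pmult)
  finally show ?thesis .
qed

lemma alg_iso_smul:
  "alg_iso q p \<Phi> \<Longrightarrow> x \<in> KQ \<Longrightarrow> y \<in> KQ \<Longrightarrow> \<Phi> (cls q x) = cls p y \<Longrightarrow>
    \<Phi> (cls q (smul c x)) = cls p (smul c y)"
  unfolding alg_iso_def by blast

lemma alg_iso_zero:
  assumes "alg_iso q p \<Phi>"
  shows "\<Phi> (cls q 0) = cls p 0"
  using assms ring_hom_zero[OF _ ring_Aq ring_Aq, of \<Phi> q p]
  by (simp add: alg_iso_def ring_iso_def cls_zero)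

lemma alg_iso_Rel_diff:
  assumes "alg_iso q p \<Phi>" "x1 \<in> KQ" "x2 \<in> KQ" "y1 \<in> KQ" "y2 \<in> KQ"
    "\<Phi> (cls q x1) = cls p y1" "\<Phi> (cls q x2) = cls p y2"
  shows "x1 - x2 \<in> Rel q \<longleftrightarrow> y1 - y2 \<in> Rel p"
proof -
  have "inj_on \<Phi> (carrier (Aq q))"
    using assms(1) by (simp add: alg_iso_def ring_iso_def bij_betw_def)
  then have "cls q x1 = cls q x2 \<longleftrightarrow> \<Phi> (cls q x1) = \<Phi> (cls q x2)"
    using assms(2,3) by (auto simp: cls_carrier dest: inj_onD)
  with assms show ?thesis by (simp add: cls_eq_iff)
qed

section \<open>Images of the arrows\<close>

definition arr_lc :: "arrow \<Rightarrow> arrow \<Rightarrow> 'k::field \<Rightarrow> 'k \<Rightarrow> qpath \<Rightarrow> 'k" where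
  "arr_lc x y k1 k2 = smul k1 (arr x) + smul k2 (arr y)"

lemma arr_lc_apply:
  "arr_lc x y k1 k2 z = (if z = (src x, [x]) then k1 else 0) + (if z = (src y, [y]) then k2 else 0)"
  unfolding arr_lc_def by (simp add: smul_def arr_def basis_def)

lemma KQ_arr_lc: "arr_lc x y k1 k2 \<in> KQ"
  unfolding arr_lc_def by (intro KQ_add KQ_smul KQ_arr)

lemma finite_supp_arr_lc: "finite (supp (arr_lc x y k1 k2))"
  using KQ_arr_lc KQ_finite_supp by blast

lemma src_eq_V1_iff: "src w = V1 \<longleftrightarrow> w = Aa \<or> w = Ac"
  by (cases w) auto

lemma src_eq_V2_iff: "src w = V2 \<longleftrightarrow> w = Ab \<or> w = Ad"
  by (cases w) auto

lemma degree1_eq_arr_lc: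
  assumes "f \<in> KQ" "\<forall>z\<in>supp f. fst z = v \<and> length (snd z) = 1"
    and "\<And>w. src w = v \<Longrightarrow> w = x \<or> w = y" "src x = v" "src y = v" "x \<noteq> y"
  shows "f = arr_lc x y (f (v, [x])) (f (v, [y]))"
proof
  fix z :: qpath
  show "f z = arr_lc x y (f (v, [x])) (f (v, [y])) z"
  proof (cases "z \<in> supp f")
    case True
    then obtain w where z: "z = (v, [w])"
      using assms(2) by (cases z) (auto simp: length_Suc_conv)
    with True assms(1) have "src w = v"
      by (auto simp: KQ_iff valid_path_def)
    with z assms(3-6) show ?thesis by (auto simp: arr_lc_apply)
  qed (use assms(4-6) in \<open>auto simp: arr_lc_apply supp_def\<close>)
qed

lemma graded_iso_type_I_pieces:
  assumes "graded_iso q p \<Phi>" "type_I q p \<Phi>"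
  shows "\<Phi> ` Apiece q u n v = Apiece p u n v"
proof -
  obtain \<sigma> where "bij \<sigma>" and pieces: "\<And>u n v. \<Phi> ` Apiece q u n v = Apiece p (\<sigma> u) n (\<sigma> v)"
    using assms(1) unfolding graded_iso_def by blast
  have "cls q (idem V1) \<in> Apiece q V1 0 V1"
    unfolding Apiece_def
    by (rule imageI) (simp add: idem_def KQ_basis valid_path_def supp_basis path_end_def)
  then have "\<Phi> (cls q (idem V1)) \<in> Apiece p (\<sigma> V1) 0 (\<sigma> V1)"
    using pieces[of V1 0 V1] by blast
  then have "cls p (idem V1) \<in> Apiece p (\<sigma> V1) 0 (\<sigma> V1)"
    using assms(2) unfolding type_I_def by simp
  then obtain y where y: "y \<in> KQ" "\<forall>z\<in>supp y. fst z = \<sigma> V1" "cls p (idem V1) = cls p y"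
    unfolding Apiece_def by blast
  have "idem V1 - y \<in> Rel p" using cls_eq_iff[OF KQ_idem y(1)] y(3) by simp
  \<comment> \<open>Rel p has no degree-0 part, so every representative of e1 has the trivial path at V1
    in its support\<close>
  then have "(idem V1 - y) (V1, []) = 0"
    using Rel_vanishes_deg_le1 vanishes_deg_le1_iff by blast
  then have "(V1, []) \<in> supp y" by (simp add: idem_def basis_def supp_def)
  with y(2) have "\<sigma> V1 = V1" by fastforce
  moreover have "\<sigma> V2 \<noteq> \<sigma> V1" using \<open>bij \<sigma>\<close> unfolding bij_def inj_def by blast
  ultimately have "\<sigma> w = w" for w by (cases w; cases "\<sigma> V2") simp_all
  with pieces show ?thesis by simp
qed

lemma graded_iso_arr_image:
  assumes "graded_iso q p \<Phi>" "type_I q p \<Phi>"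
    and "\<And>w. src w = src u \<Longrightarrow> w = x \<or> w = y" "src x = src u" "src y = src u" "x \<noteq> y"
  obtains k1 k2 where "\<Phi> (cls q (arr u)) = cls p (arr_lc x y k1 k2)"
proof -
  have "cls q (arr u) \<in> Apiece q (src u) 1 (tgt u)"
    unfolding Apiece_def
    by (rule imageI) (simp add: arr_def KQ_basis valid_path_def supp_basis path_end_def)
  then have "\<Phi> (cls q (arr u)) \<in> Apiece p (src u) 1 (tgt u)"
    using graded_iso_type_I_pieces[OF assms(1,2)] by blast
  then obtain f where f: "f \<in> KQ" "\<forall>z\<in>supp f. fst z = src u \<and> length (snd z) = 1"
      "\<Phi> (cls q (arr u)) = cls p f"
    unfolding Apiece_def by blast
  have "f = arr_lc x y (f (src u, [x])) (f (src u, [y]))"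
    by (rule degree1_eq_arr_lc[OF f(1,2) assms(3-6)])
  with f(3) show thesis by (metis that)
qed

section \<open>The coefficient matrices\<close>

lemma alg_iso_arr_lc_independent:
  assumes iso: "alg_iso q p \<Phi>" and "x \<noteq> y"
    and x: "\<Phi> (cls q (arr x)) = cls p (arr_lc x y k1 k2)"
    and y: "\<Phi> (cls q (arr y)) = cls p (arr_lc x y k3 k4)"
    and "\<alpha> * k1 + \<beta> * k3 = 0" "\<alpha> * k2 + \<beta> * k4 = 0"
  shows "\<alpha> = 0 \<and> \<beta> = 0"
proof -
  have "smul \<alpha> (arr_lc x y k1 k2) + smul \<beta> (arr_lc x y k3 k4) = 0"
    using assms(2,5,6) by (auto simp: fun_eq_iff arr_lc_apply smul_def algebra_simps)
  moreover have "\<Phi> (cls q (arr_lc x y \<alpha> \<beta>))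
      = cls p (smul \<alpha> (arr_lc x y k1 k2) + smul \<beta> (arr_lc x y k3 k4))"
    unfolding arr_lc_def[of x y \<alpha> \<beta>]
    by (intro alg_iso_add[OF iso] alg_iso_smul[OF iso] x y KQ_smul KQ_arr KQ_arr_lc)
  ultimately have "arr_lc x y \<alpha> \<beta> - 0 \<in> Rel q"
    using alg_iso_Rel_diff[OF iso KQ_arr_lc KQ_zero KQ_zero KQ_zero] alg_iso_zero[OF iso] zero_in_Rel
    by simp
  then have "vanishes_deg_le1 (arr_lc x y \<alpha> \<beta>)" by (simp add: Rel_vanishes_deg_le1)
  then have "arr_lc x y \<alpha> \<beta> (src x, [x]) = 0" "arr_lc x y \<alpha> \<beta> (src y, [y]) = 0"
    by (simp_all add: vanishes_deg_le1_iff)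
  with \<open>x \<noteq> y\<close> show ?thesis by (simp add: arr_lc_apply)
qed

lemma alg_iso_det_nonzero:
  fixes k1 k2 k3 k4 :: "'k::field"
  assumes "alg_iso q p \<Phi>" "x \<noteq> y"
    "\<Phi> (cls q (arr x)) = cls p (arr_lc x y k1 k2)" "\<Phi> (cls q (arr y)) = cls p (arr_lc x y k3 k4)"
  shows "k1 * k4 - k2 * k3 \<noteq> 0"
proof
  assume det: "k1 * k4 - k2 * k3 = 0"
  \<comment> \<open>the columns of the adjugate, (k4, -k2) and (-k3, k1), are killed by the matrix\<close>
  have "k4 = 0 \<and> - k2 = 0" "- k3 = 0 \<and> k1 = 0"
    by (rule alg_iso_arr_lc_independent[OF assms]; use det in \<open>simp add: algebra_simps\<close>)+
  then have "(1::'k) = 0 \<and> (0::'k) = 0"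
    by (intro alg_iso_arr_lc_independent[OF assms]) simp_all
  then show False by simp
qed

lemma alg_iso_relation_coefficients:
  assumes iso: "alg_iso q p \<Phi>"
    and a: "\<Phi> (cls q (arr Aa)) = cls p (arr_lc Aa Ac k1 k2)"
    and b: "\<Phi> (cls q (arr Ab)) = cls p (arr_lc Ab Ad l1 l2)"
    and c: "\<Phi> (cls q (arr Ac)) = cls p (arr_lc Aa Ac k3 k4)"
    and d: "\<Phi> (cls q (arr Ad)) = cls p (arr_lc Ab Ad l3 l4)"
  shows "k1 * l2 - k3 * l4 = 0" "k2 * l1 - k4 * l3 = 0"
    "(k1 * l1 - k3 * l3) + (k2 * l2 - k4 * l4) = 0"
    "l1 * k2 - q * (l3 * k4) = 0" "l2 * k1 - q * (l4 * k3) = 0"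
    "p * (l1 * k1 - q * (l3 * k3)) + (l2 * k2 - q * (l4 * k4)) = 0"
proof -
  note KQ_prod = KQ_pmult[OF KQ_arr KQ_arr] KQ_pmult[OF KQ_arr_lc KQ_arr_lc]
  define X where "X = pmult (arr_lc Aa Ac k1 k2) (arr_lc Ab Ad l1 l2)
    - pmult (arr_lc Aa Ac k3 k4) (arr_lc Ab Ad l3 l4)"
  define Y where "Y = pmult (arr_lc Ab Ad l1 l2) (arr_lc Aa Ac k1 k2)
    - smul q (pmult (arr_lc Ab Ad l3 l4) (arr_lc Aa Ac k3 k4))"
  have "pmult (arr Aa) (arr Ab) - pmult (arr Ac) (arr Ad) \<in> Rel q"
    using Rel_generators_in_Rel(1) by (simp add: pmult_arr)
  then have "X \<in> Rel p" unfolding X_def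
    using alg_iso_Rel_diff[OF iso KQ_prod(1) KQ_prod(1) KQ_prod(2) KQ_prod(2)
        alg_iso_pmult[OF iso KQ_arr KQ_arr KQ_arr_lc KQ_arr_lc a b]
        alg_iso_pmult[OF iso KQ_arr KQ_arr KQ_arr_lc KQ_arr_lc c d]] by simp
  then have X: "X \<in> Rel_cover p" using Rel_subset_Rel_cover by blast
  have "pmult (arr Ab) (arr Aa) - smul q (pmult (arr Ad) (arr Ac)) \<in> Rel q"
    using Rel_generators_in_Rel(2) by (simp add: pmult_arr)
  then have "Y \<in> Rel p" unfolding Y_def
    using alg_iso_Rel_diff[OF iso KQ_prod(1) KQ_smul[OF KQ_prod(1)] KQ_prod(2) KQ_smul[OF KQ_prod(2)]
        alg_iso_pmult[OF iso KQ_arr KQ_arr KQ_arr_lc KQ_arr_lc b a]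
        alg_iso_smul[OF iso KQ_prod(1) KQ_prod(2)
          alg_iso_pmult[OF iso KQ_arr KQ_arr KQ_arr_lc KQ_arr_lc d c]]] by simp
  then have Y: "Y \<in> Rel_cover p" using Rel_subset_Rel_cover by blast
  have "X (V1, [Aa, Ad]) = k1 * l2 - k3 * l4" "X (V1, [Ac, Ab]) = k2 * l1 - k4 * l3"
    "X (V1, [Aa, Ab]) = k1 * l1 - k3 * l3" "X (V1, [Ac, Ad]) = k2 * l2 - k4 * l4"
    "Y (V2, [Ab, Ac]) = l1 * k2 - q * (l3 * k4)" "Y (V2, [Ad, Aa]) = l2 * k1 - q * (l4 * k3)"
    "Y (V2, [Ab, Aa]) = l1 * k1 - q * (l3 * k3)" "Y (V2, [Ad, Ac]) = l2 * k2 - q * (l4 * k4)"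
    unfolding X_def Y_def by (simp_all add: pmult_deg2 finite_supp_arr_lc arr_lc_apply smul_def)
  with X Y show "k1 * l2 - k3 * l4 = 0" "k2 * l1 - k4 * l3 = 0"
    "(k1 * l1 - k3 * l3) + (k2 * l2 - k4 * l4) = 0"
    "l1 * k2 - q * (l3 * k4) = 0" "l2 * k1 - q * (l4 * k3) = 0"
    "p * (l1 * k1 - q * (l3 * k3)) + (l2 * k2 - q * (l4 * k4)) = 0"
    unfolding Rel_cover_def by simp_all
qed

lemma eq_of_relation_coefficients:
  fixes p q k1 k2 k3 k4 l1 l2 l3 l4 :: "'k::field"
  assumes "q \<noteq> 1" "k1 \<noteq> 0" "k4 \<noteq> 0" "l1 * l4 - l2 * l3 \<noteq> 0"
    and "k1 * l2 - k3 * l4 = 0" "k2 * l1 - k4 * l3 = 0"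
    and "(k1 * l1 - k3 * l3) + (k2 * l2 - k4 * l4) = 0"
    and "l1 * k2 - q * (l3 * k4) = 0" "l2 * k1 - q * (l4 * k3) = 0"
    and "p * (l1 * k1 - q * (l3 * k3)) + (l2 * k2 - q * (l4 * k4)) = 0"
  shows "p = q"
proof -
  have "(1 - q) * (l3 * k4) = 0" "(1 - q) * (k3 * l4) = 0"
    using assms(6,8,5,9) by (simp_all add: algebra_simps)
  then have "l3 = 0" "k3 * l4 = 0" using assms(1,3) by simp_all
  then have "k1 * l2 = 0" using assms(5) by simp
  then have "l2 = 0" using assms(2) by simp
  with \<open>l3 = 0\<close> have "l1 \<noteq> 0" "l4 \<noteq> 0" using assms(4) by simp_all
  with \<open>l3 = 0\<close> \<open>k3 * l4 = 0\<close> assms(6) have "k2 = 0" "k3 = 0" by simp_all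
  with \<open>l2 = 0\<close> \<open>l3 = 0\<close> assms(7,10) have "k1 * l1 = k4 * l4" "p * (k1 * l1) = q * (k4 * l4)"
    by (simp_all add: algebra_simps)
  then have "(p - q) * (k1 * l1) = 0" by (simp add: algebra_simps)
  with \<open>l1 \<noteq> 0\<close> assms(2) show "p = q" by simp
qed

lemma alg_iso_eq_if_diagonal_nonzero:
  assumes iso: "alg_iso q p \<Phi>" and "q \<noteq> 1"
    and a: "\<Phi> (cls q (arr Aa)) = cls p (arr_lc Aa Ac k1 k2)"
    and b: "\<Phi> (cls q (arr Ab)) = cls p (arr_lc Ab Ad l1 l2)"
    and c: "\<Phi> (cls q (arr Ac)) = cls p (arr_lc Aa Ac k3 k4)"
    and d: "\<Phi> (cls q (arr Ad)) = cls p (arr_lc Ab Ad l3 l4)"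
    and "k1 \<noteq> 0" "k4 \<noteq> 0"
  shows "p = q"
proof (rule eq_of_relation_coefficients[OF assms(2,7,8)])
  show "l1 * l4 - l2 * l3 \<noteq> 0" using alg_iso_det_nonzero[OF iso _ b d] by simp
qed (fact alg_iso_relation_coefficients[OF iso a b c d])+

theorem lemma3p6:
  fixes p q :: "'k::field_char_0"
    and \<Phi> :: "(qpath \<Rightarrow> 'k) set \<Rightarrow> (qpath \<Rightarrow> 'k) set"
  assumes "alg_closed TYPE('k)"
    and "p \<noteq> 0" and "q \<noteq> 0" and "q \<noteq> 1"
    and "graded_iso q p \<Phi>" and "type_I q p \<Phi>"
  shows "(\<exists>k1 k2 k3 k4 l1 l2 l3 l4 :: 'k.
            k1 * k4 - k2 * k3 \<noteq> 0 \<and> l1 * l4 - l2 * l3 \<noteq> 0 \<and>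
            \<Phi> (cls q (arr Aa)) = cls p (smul k1 (arr Aa) + smul k2 (arr Ac)) \<and>
            \<Phi> (cls q (arr Ab)) = cls p (smul l1 (arr Ab) + smul l2 (arr Ad)) \<and>
            \<Phi> (cls q (arr Ac)) = cls p (smul k3 (arr Aa) + smul k4 (arr Ac)) \<and>
            \<Phi> (cls q (arr Ad)) = cls p (smul l3 (arr Ab) + smul l4 (arr Ad)))
       \<and> (\<forall>k1 k2 k3 k4 l1 l2 l3 l4 :: 'k.
            \<Phi> (cls q (arr Aa)) = cls p (smul k1 (arr Aa) + smul k2 (arr Ac)) \<and>
            \<Phi> (cls q (arr Ab)) = cls p (smul l1 (arr Ab) + smul l2 (arr Ad)) \<and>
            \<Phi> (cls q (arr Ac)) = cls p (smul k3 (arr Aa) + smul k4 (arr Ac)) \<and>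
            \<Phi> (cls q (arr Ad)) = cls p (smul l3 (arr Ab) + smul l4 (arr Ad)) \<and>
            k1 \<noteq> 0 \<and> k4 \<noteq> 0 \<longrightarrow> p = q)"
proof -
  have iso: "alg_iso q p \<Phi>" using assms(5) by (simp add: graded_iso_def)
  obtain k1 k2 where a: "\<Phi> (cls q (arr Aa)) = cls p (arr_lc Aa Ac k1 k2)"
    by (rule graded_iso_arr_image[OF assms(5,6), of Aa Aa Ac]) (auto simp: src_eq_V1_iff)
  obtain k3 k4 where c: "\<Phi> (cls q (arr Ac)) = cls p (arr_lc Aa Ac k3 k4)"
    by (rule graded_iso_arr_image[OF assms(5,6), of Ac Aa Ac]) (auto simp: src_eq_V1_iff)
  obtain l1 l2 where b: "\<Phi> (cls q (arr Ab)) = cls p (arr_lc Ab Ad l1 l2)"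
    by (rule graded_iso_arr_image[OF assms(5,6), of Ab Ab Ad]) (auto simp: src_eq_V2_iff)
  obtain l3 l4 where d: "\<Phi> (cls q (arr Ad)) = cls p (arr_lc Ab Ad l3 l4)"
    by (rule graded_iso_arr_image[OF assms(5,6), of Ad Ab Ad]) (auto simp: src_eq_V2_iff)
  have "k1 * k4 - k2 * k3 \<noteq> 0" "l1 * l4 - l2 * l3 \<noteq> 0"
    using alg_iso_det_nonzero[OF iso _ a c] alg_iso_det_nonzero[OF iso _ b d] by simp_all
  with a b c d alg_iso_eq_if_diagonal_nonzero[OF iso assms(4)] show ?thesis
    unfolding arr_lc_def by blast
qed

end
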